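(* Let $(X,d)$ be a separable metric space and $f:X\to X$ a Borel measurable map. If either $f$ has only countably many distinct stable classes, or $f$ is Lyapunov stable on its recurrent set $R(f)$, then $f$ has no $f$-invariant Borel probability measure that is an expansive measure of $f$.
   Context: The stable class of $p\in X$ is $W^s(p)=\{x\in X:\lim_{n\to\infty}d(f^n(x),f^n(p))=0\}$. The recurrent set is $R(f)=\{x\in X: x\in\omega_f(x)\}$, where $\omega_f(x)$ is the set of limits $\lim_{k\to\infty}f^{n_k}(x)$ over sequences $n_k\to\infty$. $f$ is Lyapunov stable on $A\subset X$ if for every $x\in A$ and $\epsilon>0$ there is a neighborhood $U(x)$ of $x$ with $d(f^n(x),f^n(y))<\epsilon$ for all $n\ge0$ and $y\in U(x)\cap A$. A Borel probability measure $\mu$ is an expansive measure of $f$ if there is $\delta>0$ with $\mu(\Phi_\delta(x))=0$ for all $x\in X$, where $\Phi_\delta(x)=\{y\in X: d(f^i(y),f^i(x))\le\delta \ \forall i\in\{0,1,2,\dots\}\}$; it is invariant if $\mu=\mu\circ f^{-1}$. *)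

theory Defs
  imports "HOL-Analysis.Analysis" "HOL-Probability.Probability"
begin

definition stable_class :: "('a::metric_space \<Rightarrow> 'a) \<Rightarrow> 'a \<Rightarrow> 'a set" where
  "stable_class f p = {x. (\<lambda>n. dist ((f ^^ n) x) ((f ^^ n) p)) \<longlonglongrightarrow> 0}"

definition omega_limit :: "('a::metric_space \<Rightarrow> 'a) \<Rightarrow> 'a \<Rightarrow> 'a set" where
  "omega_limit f x = {y. \<exists>n::nat \<Rightarrow> nat. filterlim n at_top sequentially \<and>
                          (\<lambda>k. (f ^^ n k) x) \<longlonglongrightarrow> y}"

definition recurrent_set :: "('a::metric_space \<Rightarrow> 'a) \<Rightarrow> 'a set" where
  "recurrent_set f = {x. x \<in> omega_limit f x}"

definition lyapunov_stable_on :: "('a::metric_space \<Rightarrow> 'a) \<Rightarrow> 'a set \<Rightarrow> bool" where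
  "lyapunov_stable_on f A \<longleftrightarrow>
     (\<forall>x\<in>A. \<forall>\<epsilon>>0. \<exists>U. open U \<and> x \<in> U \<and>
        (\<forall>y\<in>U \<inter> A. \<forall>n. dist ((f ^^ n) x) ((f ^^ n) y) < \<epsilon>))"

definition dyn_ball :: "('a::metric_space \<Rightarrow> 'a) \<Rightarrow> real \<Rightarrow> 'a \<Rightarrow> 'a set" where
  "dyn_ball f \<delta> x = {y. \<forall>i::nat. dist ((f ^^ i) y) ((f ^^ i) x) \<le> \<delta>}"

definition expansive_measure :: "('a::metric_space \<Rightarrow> 'a) \<Rightarrow> 'a measure \<Rightarrow> bool" where
  "expansive_measure f \<mu> \<longleftrightarrow> (\<exists>\<delta>>0. \<forall>x. emeasure \<mu> (dyn_ball f \<delta> x) = 0)"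

definition invariant_measure :: "('a::metric_space \<Rightarrow> 'a) \<Rightarrow> 'a measure \<Rightarrow> bool" where
  "invariant_measure f \<mu> \<longleftrightarrow> distr \<mu> \<mu> f = \<mu>"

end

theory Submission
  imports Defs
begin

text \<open>
  An invariant expansive measure vanishes on every dynamical ball \<open>\<Phi>\<^sub>\<delta>(x)\<close> and, by invariance,
  on every preimage \<open>f\<^sup>-\<^sup>N(\<Phi>\<^sub>\<delta>(x))\<close>; so it suffices that almost every point lies in one of
  countably many such sets. With countably many stable classes, every point eventually stays
  \<open>\<delta>\<close>-close to a fixed representative of its class. Under Lyapunov stability on \<open>R(f)\<close>, a
  countable base of the separable space lets countably many dynamical balls cover \<open>R(f)\<close>,
  and \<open>R(f)\<close> has full measure by Poincare recurrence.
\<close>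

lemma distr_funpow_invariant:
  assumes f: "f \<in> measurable M M" and inv: "distr M M f = M"
  shows "distr M M (f ^^ n) = M"
proof (induction n)
  case 0
  show ?case by (simp add: id_def)
next
  case (Suc n)
  have "distr M M (f ^^ Suc n) = distr (distr M M (f ^^ n)) M f"
    using distr_distr[OF f measurable_compose_n[OF f]] by simp
  then show ?case using Suc inv by (simp add: comp_def)
qed

lemma emeasure_funpow_vimage:
  assumes f: "f \<in> measurable M M" and inv: "distr M M f = M" and A: "A \<in> sets M"
  shows "emeasure M ((f ^^ n) -` A \<inter> space M) = emeasure M A"
  using emeasure_distr[OF measurable_compose_n[OF f] A, of n] distr_funpow_invariant[OF f inv]
  by simp

lemma AE_funpow_notin_null_set:
  assumes f: "f \<in> measurable M M" and inv: "distr M M f = M" and A: "A \<in> null_sets M"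
  shows "AE x in M. (f ^^ n) x \<notin> A"
proof -
  have "(f ^^ n) -` A \<inter> space M \<in> null_sets M"
    using A emeasure_funpow_vimage[OF f inv, of A n] measurable_sets[OF measurable_compose_n[OF f]]
    by (auto simp: null_sets_def)
  from AE_not_in[OF this] show ?thesis by auto
qed

lemma (in finite_measure) measure_eq_0_if_disjoint_copies:
  fixes E :: "nat \<Rightarrow> 'a set"
  assumes "range E \<subseteq> sets M" and "disjoint_family E" and "\<And>k. measure M (E k) = c"
  shows "c = 0"
proof -
  have "(\<lambda>k. measure M (E k)) sums measure M (\<Union>k. E k)"
    using assms(1,2) by (intro measure_UNION) (auto simp: emeasure_eq_measure)
  then have "summable (\<lambda>k::nat. c)" using assms(3) by (simp add: sums_summable)
  then show ?thesis using summable_LIMSEQ_zero LIMSEQ_const_iff by blast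
qed

lemma disjoint_family_funpow_vimage_no_return:
  "disjoint_family (\<lambda>k. (f ^^ (k * Suc N)) -` {x\<in>A. \<forall>n>N. (f ^^ n) x \<notin> A})"
    (is "disjoint_family ?D")
proof -
  have disjoint: "?D i \<inter> ?D j = {}" if "i < j" for i j
  proof safe
    fix x assume x: "(f ^^ (i * Suc N)) x \<in> A" "\<forall>n>N. (f ^^ n) ((f ^^ (i * Suc N)) x) \<notin> A"
      "(f ^^ (j * Suc N)) x \<in> A"
    have "j * Suc N = (j - i) * Suc N + i * Suc N"
      using \<open>i < j\<close> by (metis add_mult_distrib le_add_diff_inverse2 less_imp_le)
    then have "(f ^^ ((j - i) * Suc N)) ((f ^^ (i * Suc N)) x) = (f ^^ (j * Suc N)) x"
      by (simp add: funpow_add)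
    moreover have "(j - i) * Suc N > N"
      using \<open>i < j\<close> by (cases "j - i") auto
    ultimately show "x \<in> {}" using x by metis
  qed
  show ?thesis
    unfolding disjoint_family_on_def
  proof (intro ballI impI)
    fix i j :: nat assume "i \<noteq> j"
    then consider "i < j" | "j < i" by linarith
    then show "?D i \<inter> ?D j = {}"
    proof cases
      case 1
      then show ?thesis by (rule disjoint)
    next
      case 2
      then show ?thesis by (subst Int_commute) (rule disjoint)
    qed
  qed
qed


lemma poincare_recurrence:
  assumes M: "finite_measure M" and f: "f \<in> measurable M M" and inv: "distr M M f = M"
    and A: "A \<in> sets M"
  shows "{x\<in>A. \<forall>n>N. (f ^^ n) x \<notin> A} \<in> null_sets M"
proof -
  interpret finite_measure M by fact
  define S where "S = {x\<in>A. \<forall>n>N. (f ^^ n) x \<notin> A}"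
  have [measurable]: "f \<in> measurable M M" "A \<in> sets M" by fact+
  have S_sets: "S \<in> sets M"
  proof -
    have "S = {x\<in>space M. x \<in> A \<and> (\<forall>n\<in>{N<..}. (f ^^ n) x \<notin> A)}"
      using sets.sets_into_space[OF A] unfolding S_def by auto
    also have "\<dots> \<in> sets M" by measurable
    finally show ?thesis .
  qed
  define E where "E k = (f ^^ (k * Suc N)) -` S \<inter> space M" for k
  have "range E \<subseteq> sets M"
    unfolding E_def using S_sets measurable_sets[OF measurable_compose_n[OF f]] by blast
  moreover have "disjoint_family E"
    using disjoint_family_funpow_vimage_no_return[where f=f and N=N and A=A]
    unfolding E_def S_def by (rule disjoint_family_subset) blast
  moreover have "measure M (E k) = measure M S" for k
    using emeasure_funpow_vimage[OF f inv S_sets] unfolding E_def measure_def by simp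
  ultimately have "measure M S = 0"
    by (rule measure_eq_0_if_disjoint_copies)
  then show ?thesis
    using S_sets unfolding S_def[symmetric] by (simp add: emeasure_eq_measure null_sets_def)
qed

lemma recurrent_setI:
  fixes f :: "'a::metric_space \<Rightarrow> 'a"
  assumes "\<And>e N. e > 0 \<Longrightarrow> \<exists>n>N. dist ((f ^^ n) x) x < e"
  shows "x \<in> recurrent_set f"
proof -
  have "\<exists>n>k. dist ((f ^^ n) x) x < inverse (real (Suc k))" for k
    by (rule assms) simp
  then obtain r where r: "\<And>k. k < r k" "\<And>k. dist ((f ^^ r k) x) x < inverse (real (Suc k))"
    by metis
  have "filterlim r at_top sequentially"
    by (rule filterlim_at_top_mono[OF filterlim_ident]) (simp add: r(1) less_imp_le)
  moreover have "(\<lambda>k. (f ^^ r k) x) \<longlonglongrightarrow> x"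
  proof (rule tendsto_dist_iff[THEN iffD2])
    have "norm (dist ((f ^^ r k) x) x) \<le> inverse (real (Suc k))" for k
      using r(2)[of k] by simp
    then show "(\<lambda>k. dist ((f ^^ r k) x) x) \<longlonglongrightarrow> 0"
      by (intro Lim_null_comparison[OF always_eventually LIMSEQ_inverse_real_of_nat]) auto
  qed
  ultimately show ?thesis
    unfolding recurrent_set_def omega_limit_def by blast
qed

lemma separable_metric_second_countable:
  assumes "separable_space (euclidean :: 'a::metric_space topology)"
  shows "second_countable (euclidean :: 'a topology)"
proof -
  obtain D :: "'a set" where "countable D" and D: "closure D = UNIV"
    using assms unfolding separable_space_def by auto
  define \<B> where "\<B> = (\<lambda>(d, m). ball d (inverse (real (Suc m)))) ` (D \<times> UNIV)"
  have "\<exists>V\<in>\<B>. x \<in> V \<and> V \<subseteq> U" if "open U" and "x \<in> U" for U and x :: 'a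
  proof -
    obtain e where "e > 0" "ball x e \<subseteq> U" using openE[OF \<open>open U\<close> \<open>x \<in> U\<close>] .
    obtain m where m: "inverse (real (Suc m)) < e / 2"
      using reals_Archimedean[of "e / 2"] \<open>e > 0\<close> by auto
    obtain d where "d \<in> D" and d: "dist d x < inverse (real (Suc m))"
      using D closure_approachable[of x D, THEN iffD1, rule_format, of "inverse (real (Suc m))"]
      by auto
    have "ball d (inverse (real (Suc m))) \<subseteq> ball x e"
    proof
      fix z assume "z \<in> ball d (inverse (real (Suc m)))"
      then show "z \<in> ball x e"
        using d m dist_triangle[of x z d] by (simp add: dist_commute)
    qed
    moreover have "ball d (inverse (real (Suc m))) \<in> \<B>"
      using \<open>d \<in> D\<close> unfolding \<B>_def by blast
    moreover have "x \<in> ball d (inverse (real (Suc m)))"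
      using d by (simp add: dist_commute)
    ultimately show ?thesis
      using \<open>ball x e \<subseteq> U\<close> by blast
  qed
  moreover have "countable \<B>"
    using \<open>countable D\<close> unfolding \<B>_def by simp
  moreover have "\<forall>V\<in>\<B>. open V"
    unfolding \<B>_def by auto
  ultimately show ?thesis
    unfolding second_countable_def by (intro exI[of _ \<B>]) simp
qed

lemma AE_recurrent_set:
  fixes f :: "'a::metric_space \<Rightarrow> 'a"
  assumes base: "second_countable (euclidean :: 'a topology)"
    and M: "finite_measure M" and sets_M: "sets M = sets borel"
    and f: "f \<in> borel_measurable borel" and inv: "distr M M f = M"
  shows "AE x in M. x \<in> recurrent_set f"
proof -
  obtain \<B> :: "'a set set" where "countable \<B>" and \<B>_open: "\<And>V. V \<in> \<B> \<Longrightarrow> open V"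
    and \<B>_base: "\<And>U x. open U \<Longrightarrow> x \<in> U \<Longrightarrow> \<exists>V\<in>\<B>. x \<in> V \<and> V \<subseteq> U"
    using base unfolding second_countable_def by auto
  have fM: "f \<in> measurable M M"
    using f by (simp add: measurable_cong_sets[OF sets_M sets_M])
  have returns: "AE x in M. x \<in> V \<longrightarrow> (\<exists>n>N. (f ^^ n) x \<in> V)" if "V \<in> \<B>" for V N
  proof -
    have "V \<in> sets M" using \<B>_open[OF that] sets_M by simp
    from AE_not_in[OF poincare_recurrence[OF M fM inv this, of N]]
    show ?thesis by eventually_elim auto
  qed
  have "AE x in M. \<forall>V\<in>\<B>. \<forall>N. x \<in> V \<longrightarrow> (\<exists>n>N. (f ^^ n) x \<in> V)"
    by (intro AE_ball_countable'[OF _ \<open>countable \<B>\<close>] AE_all_countable[THEN iffD2] allI returns)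
  then show ?thesis
  proof eventually_elim
    case (elim x)
    show "x \<in> recurrent_set f"
    proof (rule recurrent_setI)
      fix e :: real and N assume "e > 0"
      then obtain V where "V \<in> \<B>" "x \<in> V" "V \<subseteq> ball x e"
        using \<B>_base[of "ball x e" x] by auto
      with elim obtain n where "n > N" "(f ^^ n) x \<in> ball x e" by blast
      then show "\<exists>n>N. dist ((f ^^ n) x) x < e" by (auto simp: dist_commute)
    qed
  qed
qed

lemma dyn_ball_borel:
  assumes "f \<in> borel_measurable borel"
  shows "dyn_ball f \<delta> x \<in> sets borel"
proof -
  have "dyn_ball f \<delta> x = (\<Inter>i. (f ^^ i) -` cball ((f ^^ i) x) \<delta>)"
    unfolding dyn_ball_def by (auto simp: dist_commute)
  moreover have "(f ^^ i) -` cball ((f ^^ i) x) \<delta> \<in> sets borel" for i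
    using measurable_sets[OF measurable_compose_n[OF assms] borel_closed[OF closed_cball]] by simp
  ultimately show ?thesis by auto
qed

lemma stable_class_funpow_dyn_ball:
  assumes "y \<in> stable_class f p" and "\<delta> > 0"
  shows "\<exists>N. (f ^^ N) y \<in> dyn_ball f \<delta> ((f ^^ N) p)"
proof -
  obtain N where N: "\<And>n. n \<ge> N \<Longrightarrow> dist ((f ^^ n) y) ((f ^^ n) p) < \<delta>"
    using assms unfolding stable_class_def lim_sequentially by fastforce
  have "dist ((f ^^ i) ((f ^^ N) y)) ((f ^^ i) ((f ^^ N) p)) \<le> \<delta>" for i
    using N[of "i + N"] by (simp add: funpow_add)
  then show ?thesis unfolding dyn_ball_def by blast
qed

lemma countable_stable_classes_dyn_ball_cover:
  assumes "countable (range (stable_class f))" and "\<delta> > 0"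
  obtains P where "countable P" and "\<And>y. \<exists>p\<in>P. \<exists>N. (f ^^ N) y \<in> dyn_ball f \<delta> ((f ^^ N) p)"
proof
  define rep where "rep C = (SOME p. C = stable_class f p)" for C
  show "countable (rep ` range (stable_class f))" using assms(1) by simp
  fix y
  have "stable_class f y = stable_class f (rep (stable_class f y))"
    unfolding rep_def by (rule someI) (rule refl)
  moreover have "y \<in> stable_class f y" by (simp add: stable_class_def)
  ultimately show "\<exists>p\<in>rep ` range (stable_class f). \<exists>N. (f ^^ N) y \<in> dyn_ball f \<delta> ((f ^^ N) p)"
    using stable_class_funpow_dyn_ball[OF _ assms(2)] by (metis rangeI image_eqI)
qed

lemma lyapunov_stable_on_dyn_ball_cover:
  fixes f :: "'a::metric_space \<Rightarrow> 'a"
  assumes base: "second_countable (euclidean :: 'a topology)"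
    and stable: "lyapunov_stable_on f A" and "\<delta> > 0"
  obtains P where "countable P" and "P \<subseteq> A" and "A \<subseteq> (\<Union>p\<in>P. dyn_ball f \<delta> p)"
proof -
  obtain \<B> :: "'a set set" where "countable \<B>"
    and \<B>_base: "\<And>U x. open U \<Longrightarrow> x \<in> U \<Longrightarrow> \<exists>V\<in>\<B>. x \<in> V \<and> V \<subseteq> U"
    using base unfolding second_countable_def by auto
  have "\<forall>x\<in>A. \<exists>U. open U \<and> x \<in> U \<and> (\<forall>y\<in>U \<inter> A. \<forall>n. dist ((f ^^ n) x) ((f ^^ n) y) < \<delta>)"
    using stable \<open>\<delta> > 0\<close> unfolding lyapunov_stable_on_def by blast
  then obtain U where U: "\<forall>x\<in>A. open (U x) \<and> x \<in> U x \<and>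
      (\<forall>y\<in>U x \<inter> A. \<forall>n. dist ((f ^^ n) x) ((f ^^ n) y) < \<delta>)"
    by (rule bchoice[THEN exE])
  define \<B>' where "\<B>' = {V\<in>\<B>. \<exists>x\<in>A. V \<subseteq> U x}"
  define c where "c V = (SOME x. x \<in> A \<and> V \<subseteq> U x)" for V
  have c: "c V \<in> A \<and> V \<subseteq> U (c V)" if "V \<in> \<B>'" for V
    unfolding c_def by (rule someI_ex) (use that in \<open>unfold \<B>'_def, blast\<close>)
  show thesis
  proof (rule that)
    show "countable (c ` \<B>')"
      unfolding \<B>'_def by (intro countable_image countable_Collect \<open>countable \<B>\<close>)
    show "c ` \<B>' \<subseteq> A" using c by blast
    show "A \<subseteq> (\<Union>p\<in>c ` \<B>'. dyn_ball f \<delta> p)"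
    proof
      fix y assume "y \<in> A"
      then have "open (U y)" "y \<in> U y" using U by auto
      then obtain V where "V \<in> \<B>" "y \<in> V" "V \<subseteq> U y"
        using \<B>_base by blast
      then have "V \<in> \<B>'" unfolding \<B>'_def using \<open>y \<in> A\<close> by blast
      then have "c V \<in> A" "y \<in> U (c V)" using c \<open>y \<in> V\<close> by auto
      then have "dist ((f ^^ n) (c V)) ((f ^^ n) y) < \<delta>" for n
        using U \<open>y \<in> A\<close> by blast
      then have "y \<in> dyn_ball f \<delta> (c V)"
        unfolding dyn_ball_def by (simp add: dist_commute less_imp_le)
      then show "y \<in> (\<Union>p\<in>c ` \<B>'. dyn_ball f \<delta> p)" using \<open>V \<in> \<B>'\<close> by blast
    qed
  qed
qed

lemma AE_False_countable_stable_classes: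
  assumes f: "f \<in> measurable M M" and inv: "distr M M f = M"
    and null: "\<And>x. dyn_ball f \<delta> x \<in> null_sets M" and "\<delta> > 0"
    and "countable (range (stable_class f))"
  shows "AE x in M. False"
proof -
  obtain P where "countable P" and cover: "\<And>y. \<exists>p\<in>P. \<exists>N. (f ^^ N) y \<in> dyn_ball f \<delta> ((f ^^ N) p)"
    using countable_stable_classes_dyn_ball_cover assms(4,5) by metis
  have "AE x in M. \<forall>p\<in>P. \<forall>N. (f ^^ N) x \<notin> dyn_ball f \<delta> ((f ^^ N) p)"
    by (intro AE_ball_countable'[OF _ \<open>countable P\<close>] AE_all_countable[THEN iffD2] allI
        AE_funpow_notin_null_set[OF f inv null])
  then show ?thesis by eventually_elim (use cover in blast)
qed

lemma AE_False_lyapunov_stable_on_recurrent_set: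
  fixes f :: "'a::metric_space \<Rightarrow> 'a"
  assumes base: "second_countable (euclidean :: 'a topology)"
    and M: "finite_measure M" and sets_M: "sets M = sets borel"
    and f: "f \<in> borel_measurable borel" and inv: "distr M M f = M"
    and null: "\<And>x. dyn_ball f \<delta> x \<in> null_sets M" and "\<delta> > 0"
    and "lyapunov_stable_on f (recurrent_set f)"
  shows "AE x in M. False"
proof -
  obtain P where "countable P" and cover: "recurrent_set f \<subseteq> (\<Union>p\<in>P. dyn_ball f \<delta> p)"
    using lyapunov_stable_on_dyn_ball_cover[OF base] assms(7,8) by metis
  have "AE x in M. \<forall>p\<in>P. x \<notin> dyn_ball f \<delta> p"
    by (intro AE_ball_countable'[OF _ \<open>countable P\<close>] AE_not_in null)
  moreover have "AE x in M. x \<in> recurrent_set f"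
    using AE_recurrent_set[OF base M sets_M f inv] .
  ultimately show ?thesis by eventually_elim (use cover in blast)
qed

theorem corollary3p5:
  fixes f :: "'a::metric_space \<Rightarrow> 'a"
  assumes sep: "separable_space (euclidean :: 'a topology)"
    and meas: "f \<in> borel_measurable borel"
    and hyp: "countable (range (stable_class f)) \<or> lyapunov_stable_on f (recurrent_set f)"
  shows "\<not> (\<exists>\<mu>. prob_space \<mu> \<and> sets \<mu> = sets borel \<and>
                invariant_measure f \<mu> \<and> expansive_measure f \<mu>)"
proof
  assume "\<exists>\<mu>. prob_space \<mu> \<and> sets \<mu> = sets borel \<and>
                invariant_measure f \<mu> \<and> expansive_measure f \<mu>"
  then obtain M where "prob_space M" and sets_M: "sets M = sets borel"
    and inv: "distr M M f = M" and "expansive_measure f M"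
    unfolding invariant_measure_def by blast
  interpret prob_space M by fact
  obtain \<delta> where "\<delta> > 0" and "\<And>x. emeasure M (dyn_ball f \<delta> x) = 0"
    using \<open>expansive_measure f M\<close> unfolding expansive_measure_def by blast
  then have null: "dyn_ball f \<delta> x \<in> null_sets M" for x
    using dyn_ball_borel[OF meas] sets_M by (simp add: null_sets_def)
  have "f \<in> measurable M M"
    using meas by (simp add: measurable_cong_sets[OF sets_M sets_M])
  with hyp have "AE x in M. False"
    using AE_False_countable_stable_classes[OF _ inv null \<open>\<delta> > 0\<close>]
      AE_False_lyapunov_stable_on_recurrent_set[OF separable_metric_second_countable[OF sep]
        finite_measure sets_M meas inv null \<open>\<delta> > 0\<close>]
    by blast
  then show False by (simp add: AE_False)
qed

end
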